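(* Let $X$ be a compact space and $\mathcal{A}$ a dense subspace of $C(X)$ (real continuous functions, supremum norm) containing the constant functions and closed under finite lattice operations. Let $L$ be a Lip-norm on $\mathcal{A}$ such that $L(f\vee g)\le L(f)\vee L(g)$ for all $f,g\in\mathcal{A}$. Then $L$ is the restriction to $\mathcal{A}$ of the ordinary Lipschitz seminorm on $C(X)$ corresponding to the metric $\rho_L$ on $X$, i.e. $L(f)=\sup\{|f(x)-f(y)|/\rho_L(\delta_x,\delta_y):x,y\in X,\ x\ne y\}$ for all $f\in\mathcal{A}$.
   Context: $\mathcal{A}$ is an order-unit space with order unit $1$; its states are the continuous linear functionals $\mu$ with $\mu(1)=1=\|\mu\|$, and $\delta_x$ denotes evaluation at $x$. $\rho_L(\mu,\nu)=\sup\{|\mu(f)-\nu(f)|:f\in\mathcal{A},L(f)\le1\}$. A Lip-norm on $\mathcal{A}$ is a finite-valued seminorm $L$ with: (1) $L(f)=0$ iff $f$ is constant; (2) $\{f\in\mathcal{A}:L(f)\le1\}$ is norm-closed in $\mathcal{A}$; (3) the image of $\{f:L(f)\le1\}$ in $\mathcal{A}/\mathbb{R}1$ is totally bounded for the quotient norm. $f\vee g$ is the pointwise maximum. *)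

theory Defs
  imports "HOL-Analysis.Analysis"
begin

text \<open>Functions on the compact space are represented as total functions \<open>'a \<Rightarrow> real\<close>
  on the carrier type; \<open>C(X)\<close> is the set of continuous ones with the supremum norm.\<close>

definition supnorm :: "('a \<Rightarrow> real) \<Rightarrow> real" where
  "supnorm f = (SUP x. \<bar>f x\<bar>)"

text \<open>Quotient norm on \<open>A / \<real>1\<close>: distance to the constants.\<close>
definition quot_norm :: "('a \<Rightarrow> real) \<Rightarrow> real" where
  "quot_norm f = (INF c. supnorm (\<lambda>x. f x - c))"

definition seminorm_on :: "('a \<Rightarrow> real) set \<Rightarrow> (('a \<Rightarrow> real) \<Rightarrow> real) \<Rightarrow> bool" where
  "seminorm_on A L \<longleftrightarrow>
     (\<forall>f\<in>A. 0 \<le> L f) \<and>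
     (\<forall>f\<in>A. \<forall>c::real. L (\<lambda>x. c * f x) = \<bar>c\<bar> * L f) \<and>
     (\<forall>f\<in>A. \<forall>g\<in>A. L (\<lambda>x. f x + g x) \<le> L f + L g)"

definition lip_norm :: "('a \<Rightarrow> real) set \<Rightarrow> (('a \<Rightarrow> real) \<Rightarrow> real) \<Rightarrow> bool" where
  "lip_norm A L \<longleftrightarrow>
     seminorm_on A L \<and>
     (\<forall>f\<in>A. L f = 0 \<longleftrightarrow> (\<exists>c. f = (\<lambda>x. c))) \<and>
     (\<forall>f\<in>A. (\<forall>e>0. \<exists>g\<in>A. L g \<le> 1 \<and> supnorm (\<lambda>x. f x - g x) < e) \<longrightarrow> L f \<le> 1) \<and>
     (\<forall>e>0. \<exists>F. finite F \<and> F \<subseteq> A \<and>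
        (\<forall>f\<in>A. L f \<le> 1 \<longrightarrow> (\<exists>g\<in>F. quot_norm (\<lambda>x. f x - g x) < e)))"

definition delta :: "'a \<Rightarrow> ('a \<Rightarrow> real) \<Rightarrow> real" where
  "delta x = (\<lambda>f. f x)"

definition rhoL :: "('a \<Rightarrow> real) set \<Rightarrow> (('a \<Rightarrow> real) \<Rightarrow> real)
                   \<Rightarrow> (('a \<Rightarrow> real) \<Rightarrow> real) \<Rightarrow> (('a \<Rightarrow> real) \<Rightarrow> real) \<Rightarrow> real" where
  "rhoL A L \<mu> \<nu> = Sup {\<bar>\<mu> f - \<nu> f\<bar> | f. f \<in> A \<and> L f \<le> 1}"

text \<open>Ordinary Lipschitz seminorm for a metric \<open>d\<close> on points (with the convention
  \<open>sup \<emptyset> = 0\<close>, which is harmless since all quotients are nonnegative).\<close>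
definition lip_seminorm :: "('a \<Rightarrow> 'a \<Rightarrow> real) \<Rightarrow> ('a \<Rightarrow> real) \<Rightarrow> real" where
  "lip_seminorm d f = Sup (insert 0 {\<bar>f x - f y\<bar> / d x y | x y. x \<noteq> y})"

end

theory Submission
  imports Defs
begin

text \<open>Every \<open>f \<in> A\<close> is \<open>L f\<close>-Lipschitz for \<open>\<rho>\<^sub>L\<close> directly from the definition of \<open>\<rho>\<^sub>L\<close>.
  Conversely, suppose the Lipschitz constant of \<open>f\<close> is below \<open>c\<close>. For any two points \<open>x, y\<close>,
  an element \<open>g\<close> of the unit \<open>L\<close>-ball nearly attaining \<open>\<rho>\<^sub>L(x, y)\<close>, suitably scaled and
  shifted, lies in the \<open>L\<close>-ball of radius \<open>c\<close> and agrees with \<open>f\<close> at \<open>x\<close> and \<open>y\<close>. Since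
  \<open>L(f \<or> g) \<le> L f \<or> L g\<close>, and hence also \<open>L(f \<and> g) \<le> L f \<or> L g\<close>, that ball is closed under
  finite pointwise maxima and minima, so the compactness argument of the lattice
  Stone--Weierstrass theorem approximates \<open>f\<close> uniformly by elements of the ball. As the ball
  is closed, \<open>L f \<le> c\<close>.\<close>

lemma abs_le_supnorm:
  fixes u :: "'a::topological_space \<Rightarrow> real"
  assumes "compact (UNIV :: 'a set)" and "continuous_on UNIV u"
  shows "\<bar>u z\<bar> \<le> supnorm u"
proof -
  have "bounded (range u)"
    using compact_continuous_image[OF assms(2,1)] by (rule compact_imp_bounded)
  then have "bounded (range (\<lambda>z. norm (u z)))"
    by (simp only: bounded_norm_comp)
  then have "bdd_above (range (\<lambda>z. norm (u z)))"
    by (rule bounded_imp_bdd_above)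
  then show ?thesis
    unfolding supnorm_def real_norm_def by (rule cSUP_upper[OF UNIV_I])
qed

lemma supnorm_le: "(\<And>z. \<bar>u z\<bar> \<le> b) \<Longrightarrow> supnorm u \<le> b"
  unfolding supnorm_def by (rule cSUP_least) auto

lemma compact_finite_pointwise_subcover:
  fixes H :: "'a::topological_space \<Rightarrow> 'a \<Rightarrow> real"
  assumes "compact (UNIV :: 'a set)"
    and "\<And>y. continuous_on UNIV (H y)" and "continuous_on UNIV g"
    and "\<And>y. H y y < g y"
  obtains I where "finite I" "I \<noteq> {}" "\<And>z. \<exists>y\<in>I. H y z < g z"
proof -
  have "open {z. H y z < g z}" if "y \<in> UNIV" for y
    using assms(2,3) by (rule open_Collect_less)
  moreover have "UNIV \<subseteq> (\<Union>y\<in>UNIV. {z. H y z < g z})"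
    using assms(4) by blast
  ultimately obtain I where I: "finite I" "UNIV \<subseteq> (\<Union>y\<in>I. {z. H y z < g z})"
    by (rule compactE_image[OF assms(1)])
  then have "\<exists>y\<in>I. H y z < g z" for z
    by blast
  moreover from this have "I \<noteq> {}"
    by blast
  ultimately show thesis
    using that I(1) by blast
qed

locale lip_normed_space =
  fixes A :: "('a::topological_space \<Rightarrow> real) set" and L :: "('a \<Rightarrow> real) \<Rightarrow> real"
  assumes compact_UNIV: "compact (UNIV :: 'a set)"
    and continuous: "\<forall>f\<in>A. continuous_on UNIV f"
    and add_mem: "\<forall>f\<in>A. \<forall>g\<in>A. (\<lambda>x. f x + g x) \<in> A"
    and scale_mem: "\<forall>f\<in>A. \<forall>c::real. (\<lambda>x. c * f x) \<in> A"
    and const_mem: "\<forall>c::real. (\<lambda>x. c) \<in> A"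
    and lip_norm: "lip_norm A L"
begin

abbreviation rho :: "'a \<Rightarrow> 'a \<Rightarrow> real" where
  "rho x y \<equiv> rhoL A L (delta x) (delta y)"

definition lip_ball :: "real \<Rightarrow> ('a \<Rightarrow> real) set" where
  "lip_ball c = {g \<in> A. L g \<le> c}"

lemma L_seminorm: "seminorm_on A L"
  using lip_norm unfolding lip_norm_def by simp

lemma L_nonneg: "f \<in> A \<Longrightarrow> 0 \<le> L f"
  using L_seminorm unfolding seminorm_on_def by simp

lemma L_scale: "f \<in> A \<Longrightarrow> L (\<lambda>x. c * f x) = \<bar>c\<bar> * L f"
  using L_seminorm unfolding seminorm_on_def by simp

lemma L_add: "f \<in> A \<Longrightarrow> g \<in> A \<Longrightarrow> L (\<lambda>x. f x + g x) \<le> L f + L g"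
  using L_seminorm unfolding seminorm_on_def by simp

lemma L_eq_0_iff: "f \<in> A \<Longrightarrow> L f = 0 \<longleftrightarrow> (\<exists>c. f = (\<lambda>x. c))"
  using lip_norm unfolding lip_norm_def by blast

lemma L_const: "L (\<lambda>x. c) = 0"
  using L_eq_0_iff const_mem by blast

lemma uminus_mem: "f \<in> A \<Longrightarrow> (\<lambda>x. - f x) \<in> A"
  using scale_mem[rule_format, of f "-1"] by simp

lemma L_uminus: "f \<in> A \<Longrightarrow> L (\<lambda>x. - f x) = L f"
  using L_scale[of f "-1"] by simp

lemma add_const_mem: "f \<in> A \<Longrightarrow> (\<lambda>x. f x + a) \<in> A"
  using add_mem const_mem by simp

lemma divide_mem: "f \<in> A \<Longrightarrow> (\<lambda>x. f x / c) \<in> A"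
  using scale_mem[rule_format, of f "inverse c"] by (simp add: divide_inverse mult.commute)

lemma L_divide: "f \<in> A \<Longrightarrow> L (\<lambda>x. f x / c) = L f / \<bar>c\<bar>"
  using L_scale[of f "inverse c"] by (simp add: divide_inverse mult.commute)

lemma L_add_const_le: "f \<in> A \<Longrightarrow> L (\<lambda>x. f x + a) \<le> L f"
  using L_add[of f "\<lambda>x. a"] const_mem L_const by simp

lemma const_in_lip_ball: "0 \<le> c \<Longrightarrow> (\<lambda>x. a) \<in> lip_ball c"
  unfolding lip_ball_def using const_mem L_const by simp

lemma rho_eq_SUP: "rho x y = (SUP g\<in>lip_ball 1. \<bar>g x - g y\<bar>)"
  unfolding rhoL_def delta_def lip_ball_def image_def by (rule arg_cong[where f = Sup]) blast

lemma totally_bounded: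
  assumes "e > 0"
  obtains F where "finite F" "F \<subseteq> A" "\<forall>f\<in>lip_ball 1. \<exists>g\<in>F. quot_norm (\<lambda>x. f x - g x) < e"
proof -
  have "\<forall>e>0. \<exists>F. finite F \<and> F \<subseteq> A \<and>
      (\<forall>f\<in>A. L f \<le> 1 \<longrightarrow> (\<exists>g\<in>F. quot_norm (\<lambda>x. f x - g x) < e))"
    using lip_norm unfolding lip_norm_def by (elim conjE)
  from this[rule_format, OF assms] show thesis
    using that unfolding lip_ball_def by blast
qed

text \<open>By total boundedness, each \<open>f\<close> in the unit ball is within 1 of \<open>g + a\<close> for one of
  finitely many \<open>g\<close> and some constant \<open>a\<close>, so \<open>|f x - f y| < |g x - g y| + 2\<close>.\<close>
lemma bdd_above_lip_ball_diffs: "bdd_above ((\<lambda>g. \<bar>g x - g y\<bar>) ` lip_ball 1)"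
proof -
  obtain F where F: "finite F" "F \<subseteq> A"
    and near: "\<forall>f\<in>lip_ball 1. \<exists>g\<in>F. quot_norm (\<lambda>x. f x - g x) < 1"
    using totally_bounded[OF zero_less_one] by blast
  have "\<bar>f x - f y\<bar> \<le> (\<Sum>g\<in>F. \<bar>g x - g y\<bar>) + 2" if f: "f \<in> lip_ball 1" for f
  proof -
    obtain g where g: "g \<in> F" "quot_norm (\<lambda>x. f x - g x) < 1"
      using near f by blast
    then obtain a where a: "supnorm (\<lambda>z. f z - g z - a) < 1"
      using cInf_lessD[of "range (\<lambda>a. supnorm (\<lambda>z. f z - g z - a))" 1]
      unfolding quot_norm_def by auto
    have cont: "continuous_on UNIV (\<lambda>z. f z - g z - a)"
      using f g F continuous unfolding lip_ball_def by (intro continuous_intros) auto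
    have "\<bar>f z - g z - a\<bar> < 1" for z
      by (rule le_less_trans[OF abs_le_supnorm[OF compact_UNIV cont] a])
    from this[of x] this[of y] have "\<bar>f x - f y\<bar> < \<bar>g x - g y\<bar> + 2"
      by linarith
    moreover have "\<bar>g x - g y\<bar> \<le> (\<Sum>g\<in>F. \<bar>g x - g y\<bar>)"
      by (rule member_le_sum[OF g(1) abs_ge_zero F(1)])
    ultimately show ?thesis
      by linarith
  qed
  then show ?thesis
    by (rule bdd_aboveI2)
qed

lemma rho_nonneg: "0 \<le> rho x y"
  unfolding rho_eq_SUP
  by (rule cSUP_upper2[OF bdd_above_lip_ball_diffs const_in_lip_ball]) auto

lemma abs_diff_le_L_mult_rho:
  assumes f: "f \<in> A"
  shows "\<bar>f x - f y\<bar> \<le> L f * rho x y"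
proof (cases "L f = 0")
  case True
  then show ?thesis
    using L_eq_0_iff f L_const rho_nonneg by auto
next
  case False
  then have pos: "L f > 0"
    using L_nonneg[OF f] by linarith
  have "(\<lambda>z. f z / L f) \<in> lip_ball 1"
    using divide_mem[OF f] L_divide[OF f] pos unfolding lip_ball_def by simp
  then have "\<bar>f x / L f - f y / L f\<bar> \<le> rho x y"
    unfolding rho_eq_SUP using bdd_above_lip_ball_diffs by (auto intro: cSUP_upper2)
  then show ?thesis
    using pos by (simp add: diff_divide_distrib[symmetric] divide_le_eq mult.commute)
qed

lemma lip_quotient_le_L:
  assumes f: "f \<in> A"
  shows "\<bar>f x - f y\<bar> / rho x y \<le> L f"
proof (cases "rho x y = 0")
  case False
  then have "rho x y > 0"
    using rho_nonneg[of x y] by linarith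
  then show ?thesis
    using abs_diff_le_L_mult_rho[OF f] by (simp add: pos_divide_le_eq)
qed (simp add: L_nonneg f)

lemma lip_quotients_le_L:
  "f \<in> A \<Longrightarrow> q \<in> insert 0 {\<bar>f x - f y\<bar> / rho x y | x y. x \<noteq> y} \<Longrightarrow> q \<le> L f"
  using L_nonneg lip_quotient_le_L by auto

lemma bdd_above_lip_quotients:
  "f \<in> A \<Longrightarrow> bdd_above (insert 0 {\<bar>f x - f y\<bar> / rho x y | x y. x \<noteq> y})"
  by (rule bdd_aboveI) (rule lip_quotients_le_L)

lemma lip_seminorm_le_L: "f \<in> A \<Longrightarrow> lip_seminorm rho f \<le> L f"
  unfolding lip_seminorm_def by (rule cSup_least) (auto intro: lip_quotients_le_L)

lemma lip_seminorm_nonneg: "f \<in> A \<Longrightarrow> 0 \<le> lip_seminorm rho f"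
  unfolding lip_seminorm_def by (rule cSup_upper[OF insertI1 bdd_above_lip_quotients])

lemma lip_quotient_le_lip_seminorm:
  assumes f: "f \<in> A" and "x \<noteq> y"
  shows "\<bar>f x - f y\<bar> / rho x y \<le> lip_seminorm rho f"
proof -
  have "\<bar>f x - f y\<bar> / rho x y \<in> insert 0 {\<bar>f x - f y\<bar> / rho x y | x y. x \<noteq> y}"
    using \<open>x \<noteq> y\<close> by blast
  then show ?thesis
    unfolding lip_seminorm_def by (rule cSup_upper[OF _ bdd_above_lip_quotients[OF f]])
qed

lemma abs_diff_le_lip_seminorm_mult_rho:
  assumes f: "f \<in> A"
  shows "\<bar>f x - f y\<bar> \<le> lip_seminorm rho f * rho x y"
proof -
  consider "x = y" | "rho x y = 0" | "x \<noteq> y" "rho x y > 0"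
    using rho_nonneg[of x y] by (metis order_le_less)
  then show ?thesis
  proof cases
    case 3
    have "\<bar>f x - f y\<bar> / rho x y \<le> lip_seminorm rho f"
      using lip_quotient_le_lip_seminorm[OF f 3(1)] .
    then show ?thesis
      using 3(2) by (simp add: pos_divide_le_eq)
  qed (use abs_diff_le_L_mult_rho[OF f, of x y] lip_seminorm_nonneg[OF f] rho_nonneg[of x y] in auto)
qed

lemma affine_in_lip_ball:
  assumes "g \<in> lip_ball 1" "\<bar>t\<bar> \<le> c"
  shows "(\<lambda>z. t * g z + a) \<in> lip_ball c"
proof -
  have g: "g \<in> A" "L g \<le> 1"
    using assms(1) unfolding lip_ball_def by auto
  have tg: "(\<lambda>z. t * g z) \<in> A"
    using scale_mem g(1) by blast
  have "L (\<lambda>z. t * g z + a) \<le> L (\<lambda>z. t * g z)"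
    by (rule L_add_const_le[OF tg])
  also have "\<dots> = \<bar>t\<bar> * L g"
    by (rule L_scale[OF g(1)])
  also have "\<dots> \<le> c"
    using assms(2) g(2) L_nonneg[OF g(1)] mult_left_le[of "L g" "\<bar>t\<bar>"] by linarith
  finally show ?thesis
    unfolding lip_ball_def using add_const_mem[OF tg] by blast
qed

lemma two_point_interpolation:
  assumes f: "f \<in> A" and c: "lip_seminorm rho f < c"
  shows "\<exists>h\<in>lip_ball c. h x = f x \<and> h y = f y"
proof (cases "f x = f y")
  case True
  then show ?thesis
    using const_in_lip_ball[of c "f x"] lip_seminorm_nonneg[OF f] c by auto
next
  case False
  have c_pos: "c > 0"
    using lip_seminorm_nonneg[OF f] c by linarith
  have "rho x y \<noteq> 0"
    using False abs_diff_le_L_mult_rho[OF f, of x y] by auto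
  then have rho_pos: "rho x y > 0"
    using rho_nonneg[of x y] by linarith
  have "\<bar>f x - f y\<bar> \<le> lip_seminorm rho f * rho x y"
    using abs_diff_le_lip_seminorm_mult_rho[OF f] .
  also have "\<dots> < c * rho x y"
    using c rho_pos by simp
  finally have "\<bar>f x - f y\<bar> / c < rho x y"
    using c_pos by (simp add: pos_divide_less_eq mult.commute)
  moreover have "lip_ball 1 \<noteq> {}"
    using const_in_lip_ball[of 1 0] by auto
  ultimately have "\<exists>g\<in>lip_ball 1. \<bar>f x - f y\<bar> / c < \<bar>g x - g y\<bar>"
    unfolding rho_eq_SUP by (simp add: less_cSUP_iff[OF _ bdd_above_lip_ball_diffs])
  then obtain g where g: "g \<in> lip_ball 1" and fg: "\<bar>f x - f y\<bar> / c < \<bar>g x - g y\<bar>"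
    by blast
  have "\<bar>f x - f y\<bar> < c * \<bar>g x - g y\<bar>"
    using fg c_pos by (simp add: pos_divide_less_eq mult.commute)
  then have g_ne: "g x \<noteq> g y"
    by auto
  define t where "t = (f x - f y) / (g x - g y)"
  have "\<bar>t\<bar> \<le> c"
    using \<open>\<bar>f x - f y\<bar> < c * \<bar>g x - g y\<bar>\<close> g_ne
    unfolding t_def by (simp add: pos_divide_le_eq)
  then have "(\<lambda>z. t * g z + (f x - t * g x)) \<in> lip_ball c"
    using g by (rule affine_in_lip_ball[rotated])
  moreover have "t * (g x - g y) = f x - f y"
    using g_ne unfolding t_def by simp
  then have "t * g y + (f x - t * g x) = f y"
    by (simp add: right_diff_distrib)
  ultimately show ?thesis
    by (auto intro!: bexI[where x = "\<lambda>z. t * g z + (f x - t * g x)"])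
qed

lemma L_le_1_if_uniform_approx:
  assumes f: "f \<in> A" and approx: "\<And>e. e > 0 \<Longrightarrow> \<exists>k\<in>lip_ball 1. \<forall>z. \<bar>k z - f z\<bar> < e"
  shows "L f \<le> 1"
proof -
  have "\<exists>g\<in>A. L g \<le> 1 \<and> supnorm (\<lambda>x. f x - g x) < e" if "e > 0" for e
  proof -
    obtain k where k: "k \<in> lip_ball 1" "\<forall>z. \<bar>k z - f z\<bar> < e / 2"
      using approx[of "e / 2"] \<open>e > 0\<close> by auto
    have "supnorm (\<lambda>x. f x - k x) \<le> e / 2"
      using k(2) by (intro supnorm_le) (simp add: abs_minus_commute less_imp_le)
    then show ?thesis
      using k(1) \<open>e > 0\<close> unfolding lip_ball_def by force
  qed
  then show ?thesis
    using f lip_norm unfolding lip_norm_def by blast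
qed

lemma divide_in_lip_ball: "k \<in> lip_ball c \<Longrightarrow> c > 0 \<Longrightarrow> (\<lambda>z. k z / c) \<in> lip_ball 1"
  unfolding lip_ball_def using divide_mem L_divide by simp

lemma L_le_if_uniform_approx:
  assumes f: "f \<in> A" and c: "c > 0"
    and approx: "\<And>e. e > 0 \<Longrightarrow> \<exists>k\<in>lip_ball c. \<forall>z. \<bar>k z - f z\<bar> < e"
  shows "L f \<le> c"
proof -
  have "\<exists>k\<in>lip_ball 1. \<forall>z. \<bar>k z - f z / c\<bar> < e" if "e > 0" for e
  proof -
    obtain k where k: "k \<in> lip_ball c" "\<forall>z. \<bar>k z - f z\<bar> < e * c"
      using approx[of "e * c"] \<open>e > 0\<close> c by auto
    have "\<bar>k z / c - f z / c\<bar> < e" for z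
      using k(2) c by (simp add: diff_divide_distrib[symmetric] pos_divide_less_eq)
    then show ?thesis
      using divide_in_lip_ball[OF k(1) c] by (auto intro!: bexI[where x = "\<lambda>z. k z / c"])
  qed
  then have "L (\<lambda>z. f z / c) \<le> 1"
    by (intro L_le_1_if_uniform_approx divide_mem f)
  then show ?thesis
    using L_divide[OF f] c by (simp add: divide_le_eq)
qed

end

locale lattice_lip_normed_space = lip_normed_space +
  assumes max_mem: "\<forall>f\<in>A. \<forall>g\<in>A. (\<lambda>x. max (f x) (g x)) \<in> A"
    and L_max_le: "\<forall>f\<in>A. \<forall>g\<in>A. L (\<lambda>x. max (f x) (g x)) \<le> max (L f) (L g)"
begin

lemma max_in_lip_ball:
  assumes "f \<in> lip_ball c" "g \<in> lip_ball c"
  shows "(\<lambda>x. max (f x) (g x)) \<in> lip_ball c"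
proof -
  have f: "f \<in> A" "L f \<le> c" and g: "g \<in> A" "L g \<le> c"
    using assms unfolding lip_ball_def by auto
  have "L (\<lambda>x. max (f x) (g x)) \<le> max (L f) (L g)"
    using L_max_le f(1) g(1) by blast
  moreover have "(\<lambda>x. max (f x) (g x)) \<in> A"
    using max_mem f(1) g(1) by blast
  ultimately show ?thesis
    unfolding lip_ball_def using f(2) g(2) by simp
qed

lemma Max_image_in_lip_ball:
  "finite I \<Longrightarrow> I \<noteq> {} \<Longrightarrow> H ` I \<subseteq> lip_ball c \<Longrightarrow> (\<lambda>z. Max ((\<lambda>i. H i z) ` I)) \<in> lip_ball c"
proof (induction I rule: finite_ne_induct)
  case (singleton i)
  then show ?case by simp
next
  case (insert i I)
  then have "(\<lambda>z. max (H i z) (Max ((\<lambda>i. H i z) ` I))) \<in> lip_ball c"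
    by (intro max_in_lip_ball) auto
  then show ?case
    using insert.hyps by simp
qed

lemma uminus_in_lip_ball: "f \<in> lip_ball c \<Longrightarrow> (\<lambda>x. - f x) \<in> lip_ball c"
  unfolding lip_ball_def using uminus_mem L_uminus by simp

lemma Min_image_in_lip_ball:
  assumes "finite I" "I \<noteq> {}" "H ` I \<subseteq> lip_ball c"
  shows "(\<lambda>z. Min ((\<lambda>i. H i z) ` I)) \<in> lip_ball c"
proof -
  have "(\<lambda>z. Max ((\<lambda>i. - H i z) ` I)) \<in> lip_ball c"
    using assms uminus_in_lip_ball by (intro Max_image_in_lip_ball) auto
  moreover have "(\<lambda>z. Min ((\<lambda>i. H i z) ` I)) = (\<lambda>z. - Max ((\<lambda>i. - H i z) ` I))"
    using assms(1,2) by (simp add: image_image)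
  ultimately show ?thesis
    using uminus_in_lip_ball by simp
qed

lemma approx_from_above_fixing_point:
  assumes f: "f \<in> A" and c: "lip_seminorm rho f < c" and d: "d > 0"
  shows "\<exists>k\<in>lip_ball c. k x = f x \<and> (\<forall>z. k z < f z + d)"
proof -
  have "\<forall>y. \<exists>h. h \<in> lip_ball c \<and> h x = f x \<and> h y = f y"
    using two_point_interpolation[OF f c] by blast
  from choice[OF this] obtain H where H: "\<forall>y. H y \<in> lip_ball c \<and> H y x = f x \<and> H y y = f y"
    by blast
  have "continuous_on UNIV (H y)" for y
    using H continuous unfolding lip_ball_def by blast
  moreover have "continuous_on UNIV (\<lambda>z. f z + d)"
    using continuous f by (intro continuous_intros) auto
  moreover have "H y y < f y + d" for y
    using H d by simp
  ultimately obtain I where I: "finite I" "I \<noteq> {}" "\<And>z. \<exists>y\<in>I. H y z < f z + d"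
    by (rule compact_finite_pointwise_subcover[OF compact_UNIV]) blast
  define k where "k z = Min ((\<lambda>y. H y z) ` I)" for z
  have "k \<in> lip_ball c"
    unfolding k_def using I H by (intro Min_image_in_lip_ball) auto
  moreover have "k x = f x"
    unfolding k_def using I(2) H by (simp add: image_constant_conv)
  moreover have "k z < f z + d" for z
  proof -
    obtain y where "y \<in> I" "H y z < f z + d"
      using I(3) by blast
    moreover from this have "k z \<le> H y z"
      unfolding k_def by (intro Min_le finite_imageI I(1) imageI)
    ultimately show ?thesis
      by linarith
  qed
  ultimately show ?thesis
    by blast
qed

lemma uniform_approx_in_lip_ball:
  assumes f: "f \<in> A" and c: "lip_seminorm rho f < c" and d: "d > 0"
  shows "\<exists>k\<in>lip_ball c. \<forall>z. \<bar>k z - f z\<bar> < d"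
proof -
  have "\<forall>x. \<exists>h. h \<in> lip_ball c \<and> h x = f x \<and> (\<forall>z. h z < f z + d)"
    using approx_from_above_fixing_point[OF f c d] by blast
  from choice[OF this] obtain H
    where H: "\<forall>x. H x \<in> lip_ball c \<and> H x x = f x \<and> (\<forall>z. H x z < f z + d)"
    by blast
  have "continuous_on UNIV (\<lambda>z. - H y z)" for y
    using H continuous unfolding lip_ball_def by (intro continuous_intros) blast
  moreover have "continuous_on UNIV (\<lambda>z. d - f z)"
    using continuous f by (intro continuous_intros) auto
  moreover have "- H y y < d - f y" for y
    using H d by simp
  ultimately obtain I where I: "finite I" "I \<noteq> {}" "\<And>z. \<exists>y\<in>I. - H y z < d - f z"
    by (rule compact_finite_pointwise_subcover[OF compact_UNIV]) blast
  define k where "k z = Max ((\<lambda>x. H x z) ` I)" for z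
  have "k \<in> lip_ball c"
    unfolding k_def using I H by (intro Max_image_in_lip_ball) auto
  moreover have "f z - d < k z" for z
  proof -
    obtain y where "y \<in> I" "- H y z < d - f z"
      using I(3) by blast
    moreover from this have "H y z \<le> k z"
      unfolding k_def by (intro Max_ge finite_imageI I(1) imageI)
    ultimately show ?thesis
      by linarith
  qed
  moreover have "k z < f z + d" for z
  proof -
    have "k z \<in> (\<lambda>x. H x z) ` I"
      unfolding k_def using I(1,2) by (intro Max_in) auto
    then show ?thesis
      using H by auto
  qed
  ultimately show ?thesis
    by (auto simp: abs_diff_less_iff)
qed

lemma L_le_lip_seminorm:
  assumes f: "f \<in> A"
  shows "L f \<le> lip_seminorm rho f"
proof (rule dense_ge)
  fix c assume c: "lip_seminorm rho f < c"
  then have "c > 0"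
    using lip_seminorm_nonneg[OF f] by linarith
  then show "L f \<le> c"
    using L_le_if_uniform_approx[OF f] uniform_approx_in_lip_ball[OF f c] by blast
qed

end

theorem corollary8p3:
  fixes A :: "('a::t2_space \<Rightarrow> real) set" and L :: "('a \<Rightarrow> real) \<Rightarrow> real"
  assumes compact_X: "compact (UNIV :: 'a set)"
    and A_cont: "\<forall>f\<in>A. continuous_on UNIV f"
    and A_add: "\<forall>f\<in>A. \<forall>g\<in>A. (\<lambda>x. f x + g x) \<in> A"
    and A_scale: "\<forall>f\<in>A. \<forall>c::real. (\<lambda>x. c * f x) \<in> A"
    and A_const: "\<forall>c::real. (\<lambda>x. c) \<in> A"
    and A_max: "\<forall>f\<in>A. \<forall>g\<in>A. (\<lambda>x. max (f x) (g x)) \<in> A"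
    and A_min: "\<forall>f\<in>A. \<forall>g\<in>A. (\<lambda>x. min (f x) (g x)) \<in> A"
    and A_dense: "\<forall>h. continuous_on UNIV h \<longrightarrow>
                    (\<forall>e>0. \<exists>f\<in>A. supnorm (\<lambda>x. f x - h x) < e)"
    and L_lip: "lip_norm A L"
    and L_max: "\<forall>f\<in>A. \<forall>g\<in>A. L (\<lambda>x. max (f x) (g x)) \<le> max (L f) (L g)"
  shows "\<forall>f\<in>A. L f = lip_seminorm (\<lambda>x y. rhoL A L (delta x) (delta y)) f"
proof -
  interpret lattice_lip_normed_space A L
    by unfold_locales (fact compact_X A_cont A_add A_scale A_const L_lip A_max L_max)+
  show ?thesis
    by (intro ballI order_antisym L_le_lip_seminorm lip_seminorm_le_L)
qed

end
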